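(* Let $m\ge 2$ and $s,\ell,r_1,\dots,r_m\ge 1$ be integers, let $n=\sum_{i=1}^m(\ell+r_i)$ and $k=m\ell-s$, and let $\mathcal C$ be an $[n,k,\ell;r_1,\dots,r_m]$-PMDS code over a finite field $\mathbb{F}_q$. Then $\mathcal C$ has a generator matrix of the form $G=(B_1\mid\dots\mid B_m)$ where $B_i=(C_i\mid D_i)$ with $C_i\in\mathbb{F}_q^{k\times\ell}$ and $D_i\in\mathbb{F}_q^{k\times r_i}$ for $i=1,\dots,m$, and the matrix $G_C=(C_1\mid\dots\mid C_m)\in\mathbb{F}_q^{k\times m\ell}$ is of the form $G_C=[I_k\mid A]$ with $A\in\mathbb{F}_q^{k\times s}$ superregular.
   Context: A matrix is superregular if every square submatrix of it is nonsingular. An $[n,k]$-MDS code over a field $\mathbb{F}$ is a linear code in $\mathbb{F}^n$ of dimension $k$ and minimum Hamming distance $n-k+1$. PMDS codes: let $\ell,m,r_1,\dots,r_m$ be positive integers, $n=\sum_{i=1}^m(r_i+\ell)$, and $C\subseteq\mathbb{F}^n$ a linear code of dimension $k<n$ with generator matrix $G=(B_1\mid\dots\mid B_m)$, $B_i\in\mathbb{F}^{k\times(r_i+\ell)}$. Then $C$ is an $[n,k,\ell;r_1,\dots,r_m]$-PMDS code if (i) for each $i$ the row space of $B_i$ is an $[r_i+\ell,\ell]$-MDS code, and (ii) for any choice of $r_i$ erased coordinates in the $i$-th block for every $i$, the code obtained from $C$ by puncturing these coordinates is an $[m\ell,k]$-MDS code. *)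

theory Defs
  imports "Jordan_Normal_Form.Determinant" "Jordan_Normal_Form.DL_Submatrix"
begin

definition row_space :: "'a::field mat \<Rightarrow> 'a vec set" where
  "row_space G = {transpose_mat G *\<^sub>v c | c. c \<in> carrier_vec (dim_row G)}"

definition is_generator_matrix :: "nat \<Rightarrow> nat \<Rightarrow> 'a::field mat \<Rightarrow> 'a vec set \<Rightarrow> bool" where
  "is_generator_matrix k n G C \<longleftrightarrow>
     G \<in> carrier_mat k n \<and>
     (\<forall>c \<in> carrier_vec k. transpose_mat G *\<^sub>v c = 0\<^sub>v n \<longrightarrow> c = 0\<^sub>v k) \<and>
     C = row_space G"

definition linear_code :: "nat \<Rightarrow> nat \<Rightarrow> 'a::field vec set \<Rightarrow> bool" where
  "linear_code n k C \<longleftrightarrow> (\<exists>G. is_generator_matrix k n G C)"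

definition weight :: "'a::zero vec \<Rightarrow> nat" where
  "weight c = card {j. j < dim_vec c \<and> c $ j \<noteq> 0}"

definition min_distance :: "nat \<Rightarrow> 'a::zero vec set \<Rightarrow> nat" where
  "min_distance n C = Min {weight c | c. c \<in> C \<and> c \<noteq> 0\<^sub>v n}"

definition is_MDS :: "nat \<Rightarrow> nat \<Rightarrow> 'a::field vec set \<Rightarrow> bool" where
  "is_MDS n k C \<longleftrightarrow> linear_code n k C \<and> min_distance n C = n - k + 1"

definition puncture :: "nat set \<Rightarrow> 'a vec \<Rightarrow> 'a vec" where
  "puncture S c = vec (card {j. j < dim_vec c \<and> j \<in> S}) (\<lambda>j. c $ pick S j)"

definition block_off :: "nat \<Rightarrow> (nat \<Rightarrow> nat) \<Rightarrow> nat \<Rightarrow> nat" where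
  "block_off l r i = (\<Sum>j<i. r j + l)"

definition block_cols :: "nat \<Rightarrow> (nat \<Rightarrow> nat) \<Rightarrow> nat \<Rightarrow> nat set" where
  "block_cols l r i = {block_off l r i ..< block_off l r i + (r i + l)}"

definition block_mat :: "nat \<Rightarrow> (nat \<Rightarrow> nat) \<Rightarrow> 'a mat \<Rightarrow> nat \<Rightarrow> 'a mat" where
  "block_mat l r G i = mat (dim_row G) (r i + l) (\<lambda>(a,b). G $$ (a, block_off l r i + b))"

text \<open>[n,k,l;r_1..r_m]-PMDS code (blocks indexed 0..m-1).\<close>
definition is_PMDS :: "nat \<Rightarrow> nat \<Rightarrow> nat \<Rightarrow> nat \<Rightarrow> (nat \<Rightarrow> nat) \<Rightarrow> 'a::field vec set \<Rightarrow> bool" where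
  "is_PMDS n k l m r C \<longleftrightarrow>
     l > 0 \<and> m > 0 \<and> (\<forall>i<m. r i > 0) \<and> n = (\<Sum>i<m. r i + l) \<and> k < n \<and>
     (\<exists>G. is_generator_matrix k n G C \<and>
        (\<forall>i<m. is_MDS (r i + l) l (row_space (block_mat l r G i))) \<and>
        (\<forall>E. E \<subseteq> {0..<n} \<longrightarrow> (\<forall>i<m. card (E \<inter> block_cols l r i) = r i) \<longrightarrow>
             is_MDS (m * l) k (puncture ({0..<n} - E) ` C)))"

definition superregular :: "'a::field mat \<Rightarrow> bool" where
  "superregular A \<longleftrightarrow>
     (\<forall>I J. I \<subseteq> {0..<dim_row A} \<longrightarrow> J \<subseteq> {0..<dim_col A} \<longrightarrow> I \<noteq> {} \<longrightarrow> card I = card J \<longrightarrow>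
        det (submatrix A I J) \<noteq> 0)"

text \<open>G_C = (C_1|...|C_m): the first l columns of each block, concatenated.\<close>
definition GC_mat :: "nat \<Rightarrow> nat \<Rightarrow> (nat \<Rightarrow> nat) \<Rightarrow> 'a mat \<Rightarrow> 'a mat" where
  "GC_mat l m r G = mat (dim_row G) (m * l) (\<lambda>(a,j). G $$ (a, block_off l r (j div l) + j mod l))"

end

theory Submission
  imports Defs
begin

(* Puncturing C to the unerased set formed by the first l coordinates of every block gives an
   [ml,k]-MDS code.  From this, any k columns of G_C are linearly independent: a nonzero codeword
   vanishing on k of them has weight at most ml - k on that set, unless it vanishes on the whole
   set, and then exchanging one of its coordinates for a nonzero coordinate outside gives an
   unerased set on which the codeword has weight 1.  Hence the first k columns of G_C form an
   invertible matrix, and multiplying G by its inverse brings G_C into the form [I_k | A].  A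
   singular t x t submatrix of A would give a nonzero combination of the rows of [I_k | A]
   vanishing on k - t columns of I_k and on t columns of A, i.e. on k columns in total. *)

lemma bij_betw_pick:
  assumes "finite S"
  shows "bij_betw (pick S) {..<card S} S"
proof (rule bij_betw_imageI)
  show "inj_on (pick S) {..<card S}"
  proof (rule inj_onI)
    fix x y assume "x \<in> {..<card S}" "y \<in> {..<card S}" "pick S x = pick S y"
    then show "x = y"
      using pick_mono[of y S x] pick_mono[of x S y] by (cases x y rule: linorder_cases) auto
  qed
  show "pick S ` {..<card S} = S"
  proof
    show "pick S ` {..<card S} \<subseteq> S" using pick_in_set by auto
    show "S \<subseteq> pick S ` {..<card S}"
    proof
      fix i assume i: "i \<in> S"
      have "card {a\<in>S. a < i} < card S"
        using i assms by (intro psubset_card_mono) auto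
      then show "i \<in> pick S ` {..<card S}"
        by (intro image_eqI[where x="card {a\<in>S. a < i}"]) (simp_all add: pick_card_in_set[OF i])
    qed
  qed
qed

lemma weight_puncture:
  assumes "finite S" "S \<subseteq> {0..<dim_vec v}"
  shows "weight (puncture S v) = card {p\<in>S. v $ p \<noteq> 0}"
proof -
  have S: "{j. j < dim_vec v \<and> j \<in> S} = S" using assms by auto
  have "weight (puncture S v) = card {j. j < card S \<and> v $ pick S j \<noteq> 0}"
    unfolding weight_def puncture_def S by (rule arg_cong[where f=card]) auto
  also have "\<dots> = card (pick S ` {j. j < card S \<and> v $ pick S j \<noteq> 0})"
    by (rule card_image[symmetric],
        rule inj_on_subset[OF bij_betw_imp_inj_on[OF bij_betw_pick[OF assms(1)]]]) auto
  also have "pick S ` {j. j < card S \<and> v $ pick S j \<noteq> 0} = {p\<in>S. v $ p \<noteq> 0}"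
    using bij_betw_imp_surj_on[OF bij_betw_pick[OF assms(1)]] by auto
  finally show ?thesis .
qed

lemma weight_le_dim_vec: "weight v \<le> dim_vec v"
  unfolding weight_def
  using card_mono[of "{..<dim_vec v}" "{j. j < dim_vec v \<and> v $ j \<noteq> 0}"] by auto

lemma weight_zero_vec [simp]: "weight (0\<^sub>v n) = 0"
  unfolding weight_def by simp

lemma is_MDS_weight_ge:
  assumes "is_MDS N k D" "c \<in> D" "c \<noteq> 0\<^sub>v N"
  shows "N - k + 1 \<le> weight c"
proof -
  obtain G where G: "G \<in> carrier_mat k N" and D: "D = row_space G"
    using assms(1) unfolding is_MDS_def linear_code_def is_generator_matrix_def by blast
  have "weight d \<le> N" if "d \<in> D" for d
    using that weight_le_dim_vec[of d] G unfolding D row_space_def by auto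
  then have "{weight d | d. d \<in> D \<and> d \<noteq> 0\<^sub>v N} \<subseteq> {..N}" by auto
  then have "finite {weight d | d. d \<in> D \<and> d \<noteq> 0\<^sub>v N}" by (rule finite_subset) simp
  then have "min_distance N D \<le> weight c"
    unfolding min_distance_def using assms(2,3) by (auto intro!: Min_le)
  then show ?thesis using assms(1) unfolding is_MDS_def by simp
qed

lemma block_off_0 [simp]: "block_off l r 0 = 0"
  unfolding block_off_def by simp

lemma block_off_Suc [simp]: "block_off l r (Suc i) = block_off l r i + (r i + l)"
  unfolding block_off_def by simp

lemma block_off_mono: "i < i' \<Longrightarrow> block_off l r i + (r i + l) \<le> block_off l r i'"
  by (induction i') (auto simp: less_Suc_eq)

lemma finite_block_cols [simp]: "finite (block_cols l r i)"
  unfolding block_cols_def by simp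

lemma block_cols_disjoint: "i \<noteq> i' \<Longrightarrow> block_cols l r i \<inter> block_cols l r i' = {}"
  using block_off_mono[of i i' l r] block_off_mono[of i' i l r] unfolding block_cols_def
  by (cases i i' rule: linorder_cases) auto

lemma block_cols_cover: "{0..<block_off l r m} = (\<Union>i<m. block_cols l r i)"
proof (induction m)
  case (Suc m)
  have "{0..<block_off l r (Suc m)} = {0..<block_off l r m} \<union> block_cols l r m"
    unfolding block_cols_def by auto
  then show ?case using Suc by (auto simp: lessThan_Suc)
qed simp

lemma block_cols_subset: "i < m \<Longrightarrow> block_cols l r i \<subseteq> {0..<block_off l r m}"
  using block_off_mono[of i m l r] unfolding block_cols_def by auto

(* The coordinates surviving an erasure pattern of the PMDS definition: l in every block. *)
definition unerased_set :: "nat \<Rightarrow> nat \<Rightarrow> (nat \<Rightarrow> nat) \<Rightarrow> nat set \<Rightarrow> bool" where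
  "unerased_set l m r S \<longleftrightarrow>
     S \<subseteq> {0..<block_off l r m} \<and> (\<forall>i<m. card (S \<inter> block_cols l r i) = l)"

lemma card_unerased_set:
  assumes "unerased_set l m r S"
  shows "card S = m * l"
proof -
  have "S = (\<Union>i<m. S \<inter> block_cols l r i)"
    using assms block_cols_cover[of l r m] unfolding unerased_set_def by blast
  also have "card \<dots> = (\<Sum>i<m. card (S \<inter> block_cols l r i))"
    by (intro card_UN_disjoint) (auto dest: block_cols_disjoint[of _ _ l r])
  also have "\<dots> = m * l" using assms unfolding unerased_set_def by simp
  finally show ?thesis .
qed

lemma card_erasures_in_block:
  assumes "unerased_set l m r S" "i < m"
  shows "card (({0..<block_off l r m} - S) \<inter> block_cols l r i) = r i"
proof -
  have "({0..<block_off l r m} - S) \<inter> block_cols l r i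
      = block_cols l r i - S \<inter> block_cols l r i"
    using block_cols_subset[OF assms(2)] by blast
  then show ?thesis
    using assms unfolding unerased_set_def
    by (simp add: card_Diff_subset block_cols_def)
qed

lemma unerased_set_swap:
  assumes S: "unerased_set l m r S" and i: "i < m"
    and q: "q \<in> S \<inter> block_cols l r i" and p: "p \<in> block_cols l r i - S"
  shows "unerased_set l m r (insert p (S - {q}))"
  unfolding unerased_set_def
proof (intro conjI allI impI)
  have "p \<in> {0..<block_off l r m}" using p block_cols_subset[OF i] by blast
  then show "insert p (S - {q}) \<subseteq> {0..<block_off l r m}"
    using S unfolding unerased_set_def by blast
  fix j assume j: "j < m"
  show "card (insert p (S - {q}) \<inter> block_cols l r j) = l"
  proof (cases "j = i")
    case True
    have Si: "card (S \<inter> block_cols l r i) = l"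
      using S i unfolding unerased_set_def by blast
    have fin: "finite (S \<inter> block_cols l r i)" by simp
    have "insert p (S - {q}) \<inter> block_cols l r j = insert p (S \<inter> block_cols l r i - {q})"
      using True p by blast
    moreover have "card (S \<inter> block_cols l r i - {q}) = l - 1"
      using Si q by (simp only: card_Diff_singleton)
    moreover have "p \<notin> S \<inter> block_cols l r i - {q}" using p by blast
    moreover have "l > 0" using Si q fin card_gt_0_iff[of "S \<inter> block_cols l r i"] by auto
    ultimately show ?thesis using fin by simp
  next
    case False
    then have "insert p (S - {q}) \<inter> block_cols l r j = S \<inter> block_cols l r j"
      using p q block_cols_disjoint[of i j l r] by blast
    then show ?thesis using S j unfolding unerased_set_def by simp
  qed
qed

definition gc_col :: "nat \<Rightarrow> (nat \<Rightarrow> nat) \<Rightarrow> nat \<Rightarrow> nat" where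
  "gc_col l r j = block_off l r (j div l) + j mod l"

lemma gc_col_in_block_cols:
  assumes "l > 0"
  shows "gc_col l r j \<in> block_cols l r (j div l)"
  unfolding gc_col_def block_cols_def using mod_less_divisor[OF assms, of j] by auto

lemma gc_col_in_block_cols_iff:
  assumes "l > 0"
  shows "gc_col l r j \<in> block_cols l r i \<longleftrightarrow> j div l = i"
  using gc_col_in_block_cols[OF assms, of r j] block_cols_disjoint[of "j div l" i l r] by blast

lemma inj_gc_col:
  assumes "l > 0"
  shows "inj (gc_col l r)"
proof (rule injI)
  fix x y assume eq: "gc_col l r x = gc_col l r y"
  then have "y div l = x div l"
    using gc_col_in_block_cols[OF assms, of r x] gc_col_in_block_cols_iff[OF assms, of r y] by simp
  moreover from this eq have "x mod l = y mod l" unfolding gc_col_def by simp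
  ultimately show "x = y" by (metis div_mult_mod_eq)
qed

lemma div_eq_iff_in_interval:
  assumes "(l::nat) > 0"
  shows "j div l = i \<longleftrightarrow> j \<in> {i * l..<i * l + l}"
proof
  assume "j div l = i"
  then show "j \<in> {i * l..<i * l + l}"
    using div_mult_mod_eq[of j l] mod_less_divisor[OF assms, of j] by auto
qed (auto intro: div_nat_eqI simp: algebra_simps)

lemma unerased_set_gc_cols:
  assumes l: "l > 0"
  shows "unerased_set l m r (gc_col l r ` {..<m * l})"
  unfolding unerased_set_def
proof (intro conjI allI impI)
  show "gc_col l r ` {..<m * l} \<subseteq> {0..<block_off l r m}"
  proof (rule image_subsetI)
    fix j assume "j \<in> {..<m * l}"
    then have "j div l < m" by (simp add: less_mult_imp_div_less)
    then show "gc_col l r j \<in> {0..<block_off l r m}"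
      using gc_col_in_block_cols[OF l] block_cols_subset by blast
  qed
  fix i assume i: "i < m"
  have "i * l + l \<le> m * l" using i by (metis mult_Suc add.commute mult_le_mono1 Suc_leI)
  then have "{j. j < m * l \<and> j div l = i} = {i * l..<i * l + l}"
    using div_eq_iff_in_interval[OF l] by auto
  moreover have "gc_col l r ` {..<m * l} \<inter> block_cols l r i
      = gc_col l r ` {j. j < m * l \<and> j div l = i}"
    using gc_col_in_block_cols_iff[OF l] by auto
  ultimately have "gc_col l r ` {..<m * l} \<inter> block_cols l r i = gc_col l r ` {i * l..<i * l + l}"
    by simp
  moreover have "inj_on (gc_col l r) {i * l..<i * l + l}"
    using inj_gc_col[OF l] by (meson inj_on_subset subset_UNIV)
  ultimately show "card (gc_col l r ` {..<m * l} \<inter> block_cols l r i) = l"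
    by (simp add: card_image)
qed

lemma gc_col_less:
  assumes "l > 0" "j < m * l"
  shows "gc_col l r j < block_off l r m"
  using unerased_set_gc_cols[OF assms(1), of m r] assms(2) unfolding unerased_set_def by auto

lemma GC_mat_index:
  "a < dim_row G \<Longrightarrow> j < m * l \<Longrightarrow> GC_mat l m r G $$ (a, j) = G $$ (a, gc_col l r j)"
  unfolding GC_mat_def gc_col_def by simp

lemma GC_mat_carrier: "GC_mat l m r G \<in> carrier_mat (dim_row G) (m * l)"
  unfolding GC_mat_def by simp

lemma index_transpose_mult_vec:
  fixes G :: "'a::comm_semiring_0 mat"
  assumes "G \<in> carrier_mat k n" "c \<in> carrier_vec k" "p < n"
  shows "(transpose_mat G *\<^sub>v c) $ p = (\<Sum>a<k. c $ a * G $$ (a, p))"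
  using assms by (auto simp: scalar_prod_def lessThan_atLeast0 mult.commute intro!: sum.cong)

lemma transpose_GC_mat_mult_vec:
  fixes G :: "'a::comm_semiring_0 mat"
  assumes G: "G \<in> carrier_mat k N" "block_off l r m \<le> N" and l: "l > 0"
    and c: "c \<in> carrier_vec k" and j: "j < m * l"
  shows "(transpose_mat (GC_mat l m r G) *\<^sub>v c) $ j = (transpose_mat G *\<^sub>v c) $ gc_col l r j"
proof -
  have "gc_col l r j < N" using gc_col_less[OF l j, where r=r] G(2) by simp
  then show ?thesis
    using index_transpose_mult_vec[OF _ c j, of "GC_mat l m r G"] GC_mat_carrier[of l m r G]
      index_transpose_mult_vec[OF G(1) c] G(1) j by (simp add: GC_mat_index)
qed

lemma GC_mat_mult:
  fixes G :: "'a::comm_semiring_0 mat"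
  assumes B: "B \<in> carrier_mat k' k" and G: "G \<in> carrier_mat k N" "block_off l r m \<le> N"
    and l: "l > 0"
  shows "GC_mat l m r (B * G) = B * GC_mat l m r G"
proof (rule eq_matI)
  fix a j assume a: "a < dim_row (B * GC_mat l m r G)" and j: "j < dim_col (B * GC_mat l m r G)"
  then have a': "a < k'" and j': "j < m * l" using B GC_mat_carrier[of l m r G] by auto
  have col: "gc_col l r j < N" using gc_col_less[OF l j', where r=r] G(2) by simp
  have "col (GC_mat l m r G) j = col G (gc_col l r j)"
    using G j' col GC_mat_carrier[of l m r G] by (intro eq_vecI) (auto simp: GC_mat_index)
  then show "GC_mat l m r (B * G) $$ (a, j) = (B * GC_mat l m r G) $$ (a, j)"
    using a' j' B G col GC_mat_carrier[of l m r G] by (simp add: GC_mat_index)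
qed (use B G in \<open>auto simp: GC_mat_def\<close>)

lemma det_nonzero_imp_inverse:
  fixes M :: "'a::field mat"
  assumes "M \<in> carrier_mat n n" "det M \<noteq> 0"
  obtains B where "B \<in> carrier_mat n n" "M * B = 1\<^sub>m n" "B * M = 1\<^sub>m n"
  using det_non_zero_imp_unit[OF assms, of "()"] that unfolding Units_def ring_mat_simps by auto

lemma transpose_mult_vec_cancel:
  fixes B :: "'a::comm_semiring_1 mat"
  assumes "B \<in> carrier_mat k k" "B' \<in> carrier_mat k k" "B' * B = 1\<^sub>m k" "c \<in> carrier_vec k"
  shows "transpose_mat B *\<^sub>v (transpose_mat B' *\<^sub>v c) = c"
proof -
  have "transpose_mat B *\<^sub>v (transpose_mat B' *\<^sub>v c) = (transpose_mat B * transpose_mat B') *\<^sub>v c"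
    using assms by (simp add: assoc_mult_mat_vec[of _ k k _ k])
  also have "transpose_mat B * transpose_mat B' = transpose_mat (B' * B)"
    by (rule transpose_mult[OF assms(2,1), symmetric])
  finally show ?thesis using assms by simp
qed

lemma is_generator_matrix_mult:
  fixes G :: "'a::field mat"
  assumes gen: "is_generator_matrix k n G C" and B: "B \<in> carrier_mat k k" "det B \<noteq> 0"
  shows "is_generator_matrix k n (B * G) C"
proof -
  have G: "G \<in> carrier_mat k n" and C: "C = row_space G"
    and indep: "\<forall>c \<in> carrier_vec k. transpose_mat G *\<^sub>v c = 0\<^sub>v n \<longrightarrow> c = 0\<^sub>v k"
    using gen unfolding is_generator_matrix_def by auto
  obtain B' where B': "B' \<in> carrier_mat k k" "B * B' = 1\<^sub>m k" "B' * B = 1\<^sub>m k"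
    using det_nonzero_imp_inverse[OF B] .
  have BG: "transpose_mat (B * G) *\<^sub>v c = transpose_mat G *\<^sub>v (transpose_mat B *\<^sub>v c)"
    if "c \<in> carrier_vec k" for c
    using that B G by (simp add: transpose_mult assoc_mult_mat_vec[of _ n k _ k])
  have "c = 0\<^sub>v k" if c: "c \<in> carrier_vec k" "transpose_mat (B * G) *\<^sub>v c = 0\<^sub>v n" for c
  proof -
    have "transpose_mat B *\<^sub>v c = 0\<^sub>v k" using indep c B BG by simp
    then have "transpose_mat B' *\<^sub>v (transpose_mat B *\<^sub>v c) = 0\<^sub>v k" using B' by auto
    then show ?thesis using transpose_mult_vec_cancel[OF B'(1) B(1) B'(2) c(1)] by simp
  qed
  moreover have "row_space (B * G) = row_space G"
  proof
    show "row_space (B * G) \<subseteq> row_space G"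
    proof
      fix v assume "v \<in> row_space (B * G)"
      then obtain c where c: "c \<in> carrier_vec k" "v = transpose_mat (B * G) *\<^sub>v c"
        unfolding row_space_def using B G by auto
      moreover have "transpose_mat B *\<^sub>v c \<in> carrier_vec (dim_row G)" using B G c by simp
      ultimately show "v \<in> row_space G" unfolding row_space_def using BG[OF c(1)] by blast
    qed
    show "row_space G \<subseteq> row_space (B * G)"
    proof
      fix v assume "v \<in> row_space G"
      then obtain c where c: "c \<in> carrier_vec k" "v = transpose_mat G *\<^sub>v c"
        unfolding row_space_def using G by auto
      then have "v = transpose_mat (B * G) *\<^sub>v (transpose_mat B' *\<^sub>v c)"
        using BG B' transpose_mult_vec_cancel[OF B(1) B'(1) B'(3) c(1)] by simp
      moreover have "transpose_mat B' *\<^sub>v c \<in> carrier_vec (dim_row (B * G))"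
        using B B' c by simp
      ultimately show "v \<in> row_space (B * G)" unfolding row_space_def by blast
    qed
  qed
  ultimately show ?thesis using B G C unfolding is_generator_matrix_def by auto
qed

lemma systematic_form:
  fixes P :: "'a::field mat"
  assumes P: "P \<in> carrier_mat k N" and kN: "k \<le> N"
    and indep: "\<And>c. c \<in> carrier_vec k \<Longrightarrow> \<forall>j<k. (transpose_mat P *\<^sub>v c) $ j = 0 \<Longrightarrow> c = 0\<^sub>v k"
  obtains B A where "B \<in> carrier_mat k k" "det B \<noteq> 0" "A \<in> carrier_mat k (N - k)"
    "B * P = four_block_mat (1\<^sub>m k) A (0\<^sub>m 0 k) (0\<^sub>m 0 (N - k))"
proof -
  define M where "M = mat k k (\<lambda>(a, b). P $$ (a, b))"
  have M: "M \<in> carrier_mat k k" by (simp add: M_def)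
  have "det M \<noteq> 0"
  proof
    assume "det M = 0"
    then obtain c where c: "c \<in> carrier_vec k" "c \<noteq> 0\<^sub>v k" "transpose_mat M *\<^sub>v c = 0\<^sub>v k"
      using det_0_iff_vec_prod_zero_field[of "transpose_mat M" k] det_transpose[OF M] M by auto
    have "(transpose_mat P *\<^sub>v c) $ j = 0" if "j < k" for j
    proof -
      have "(transpose_mat P *\<^sub>v c) $ j = (transpose_mat M *\<^sub>v c) $ j"
        using that kN index_transpose_mult_vec[OF P c(1)] index_transpose_mult_vec[OF M c(1)]
        by (simp add: M_def)
      then show ?thesis using c(3) that by simp
    qed
    then show False using indep c by blast
  qed
  then obtain B where B: "B \<in> carrier_mat k k" "B * M = 1\<^sub>m k"
    using det_nonzero_imp_inverse[OF M] by metis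
  have "det B \<noteq> 0"
    using arg_cong[OF B(2), of det] det_mult[OF B(1) M] by auto
  define A where "A = mat k (N - k) (\<lambda>(a, b). (B * P) $$ (a, k + b))"
  have "B * P = four_block_mat (1\<^sub>m k) A (0\<^sub>m 0 k) (0\<^sub>m 0 (N - k))"
  proof (rule eq_matI)
    fix a j assume "a < dim_row (four_block_mat (1\<^sub>m k) A (0\<^sub>m 0 k) (0\<^sub>m 0 (N - k)))"
      and "j < dim_col (four_block_mat (1\<^sub>m k) A (0\<^sub>m 0 k) (0\<^sub>m 0 (N - k)))"
    then have a: "a < k" and j: "j < N" using kN by (auto simp: A_def)
    show "(B * P) $$ (a, j) = four_block_mat (1\<^sub>m k) A (0\<^sub>m 0 k) (0\<^sub>m 0 (N - k)) $$ (a, j)"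
    proof (cases "j < k")
      case True
      have "col P j = col M j" using P True kN by (intro eq_vecI) (auto simp: M_def)
      have "(B * P) $$ (a, j) = row B a \<bullet> col P j" using a j B P by simp
      also have "\<dots> = row B a \<bullet> col M j" using \<open>col P j = col M j\<close> by simp
      also have "\<dots> = (B * M) $$ (a, j)" using a True B(1) M by simp
      also have "\<dots> = 1\<^sub>m k $$ (a, j)" by (simp only: B(2))
      finally show ?thesis using a True by (simp add: A_def)
    qed (use a j kN in \<open>simp add: A_def\<close>)
  qed (use B P kN in \<open>auto simp: A_def\<close>)
  moreover have "A \<in> carrier_mat k (N - k)" by (simp add: A_def)
  ultimately show ?thesis using that B(1) \<open>det B \<noteq> 0\<close> by blast
qed


definition embed_vec :: "nat \<Rightarrow> nat set \<Rightarrow> 'a::zero vec \<Rightarrow> 'a vec" where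
  "embed_vec k I x = vec k (\<lambda>i. if i \<in> I then x $ card {a\<in>I. a < i} else 0)"

lemma embed_vec_eq_0_imp:
  assumes I: "I \<subseteq> {..<k}" and x: "x \<in> carrier_vec (card I)" and "embed_vec k I x = 0\<^sub>v k"
  shows "x = 0\<^sub>v (card I)"
proof (rule eq_vecI)
  fix a assume "a < dim_vec (0\<^sub>v (card I) :: 'a vec)"
  then have a: "a < card I" by simp
  then have "pick I a \<in> I" "pick I a < k" using pick_in_set I by auto
  then have "embed_vec k I x $ pick I a = x $ a"
    unfolding embed_vec_def using card_pick[of a I] a by simp
  then show "x $ a = 0\<^sub>v (card I) $ a" using assms(3) a \<open>pick I a < k\<close> by simp
qed (use x in simp)

lemma transpose_mult_embed_vec:
  fixes A :: "'a::comm_semiring_0 mat"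
  assumes A: "A \<in> carrier_mat k s" and I: "I \<subseteq> {..<k}" and J: "J \<subseteq> {..<s}"
    and IJ: "card I = card J" and x: "x \<in> carrier_vec (card I)" and b: "b < card J"
  shows "(transpose_mat A *\<^sub>v embed_vec k I x) $ pick J b
    = (transpose_mat (submatrix A I J) *\<^sub>v x) $ b"
proof -
  have finI: "finite I" using I finite_subset by blast
  have dims: "{i. i < dim_row A \<and> i \<in> I} = I" "{j. j < dim_col A \<and> j \<in> J} = J"
    using A I J by auto
  have "dim_row (submatrix A I J) = card I" "dim_col (submatrix A I J) = card I"
    by (simp_all only: dim_submatrix dims IJ)
  then have Sb: "submatrix A I J \<in> carrier_mat (card I) (card I)" by blast
  have "pick J b < s" using pick_in_set[of b J] b J by auto
  moreover have "embed_vec k I x \<in> carrier_vec k" by (simp add: embed_vec_def)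
  ultimately have "(transpose_mat A *\<^sub>v embed_vec k I x) $ pick J b
      = (\<Sum>a<k. embed_vec k I x $ a * A $$ (a, pick J b))"
    using index_transpose_mult_vec[OF A] by blast
  also have "\<dots> = (\<Sum>a\<in>I. x $ card {i\<in>I. i < a} * A $$ (a, pick J b))"
    using I by (intro sum.mono_neutral_cong_right) (auto simp: embed_vec_def)
  also have "\<dots> = (\<Sum>a<card I. x $ a * A $$ (pick I a, pick J b))"
    using sum.reindex_bij_betw[OF bij_betw_pick[OF finI], of "\<lambda>a. x $ card {i\<in>I. i < a} * A $$ (a, pick J b)"]
    by (simp add: card_pick)
  also have "\<dots> = (\<Sum>a<card I. x $ a * submatrix A I J $$ (a, b))"
    using b IJ by (intro sum.cong) (auto simp: submatrix_index dims)
  also have "\<dots> = (transpose_mat (submatrix A I J) *\<^sub>v x) $ b"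
    using index_transpose_mult_vec[OF Sb x] b IJ by simp
  finally show ?thesis .
qed

lemma transpose_systematic_mult_vec:
  fixes A :: "'a::comm_semiring_1 mat"
  assumes A: "A \<in> carrier_mat k s" and c: "c \<in> carrier_vec k" and j: "j < k + s"
  shows "(transpose_mat (four_block_mat (1\<^sub>m k) A (0\<^sub>m 0 k) (0\<^sub>m 0 s)) *\<^sub>v c) $ j
    = (if j < k then c $ j else (transpose_mat A *\<^sub>v c) $ (j - k))"
proof -
  have P: "four_block_mat (1\<^sub>m k) A (0\<^sub>m 0 k) (0\<^sub>m 0 s) \<in> carrier_mat k (k + s)"
    using A by auto
  show ?thesis
  proof (cases "j < k")
    case True
    have "(transpose_mat (four_block_mat (1\<^sub>m k) A (0\<^sub>m 0 k) (0\<^sub>m 0 s)) *\<^sub>v c) $ j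
        = (\<Sum>a<k. four_block_mat (1\<^sub>m k) A (0\<^sub>m 0 k) (0\<^sub>m 0 s) $$ (a, j) * c $ a)"
      using index_transpose_mult_vec[OF P c j] by (simp add: mult.commute)
    also have "\<dots> = (\<Sum>a<k. if a = j then c $ a else 0)"
      using True A by (intro sum.cong) auto
    finally show ?thesis using True by simp
  next
    case False
    then show ?thesis
      using index_transpose_mult_vec[OF P c j] index_transpose_mult_vec[OF A c, of "j - k"] A j
      by simp
  qed
qed

lemma superregular_if_systematic_columns_independent:
  fixes A :: "'a::field mat"
  assumes A: "A \<in> carrier_mat k s"
    and indep: "\<And>c Z. c \<in> carrier_vec k \<Longrightarrow> Z \<subseteq> {..<k + s} \<Longrightarrow> k \<le> card Z \<Longrightarrow>
      \<forall>j\<in>Z. (transpose_mat (four_block_mat (1\<^sub>m k) A (0\<^sub>m 0 k) (0\<^sub>m 0 s)) *\<^sub>v c) $ j = 0 \<Longrightarrow>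
      c = 0\<^sub>v k"
  shows "superregular A"
  unfolding superregular_def
proof (intro allI impI notI)
  fix I J assume I: "I \<subseteq> {0..<dim_row A}" and J: "J \<subseteq> {0..<dim_col A}"
    and IJ: "card I = card J" and det0: "det (submatrix A I J) = 0"
  have I': "I \<subseteq> {..<k}" and J': "J \<subseteq> {..<s}" using I J A by auto
  have finI: "finite I" and finJ: "finite J" using I' J' finite_subset by auto
  have dims: "{i. i < dim_row A \<and> i \<in> I} = I" "{j. j < dim_col A \<and> j \<in> J} = J"
    using I J by auto
  have "dim_row (submatrix A I J) = card I" "dim_col (submatrix A I J) = card I"
    by (simp_all only: dim_submatrix dims IJ)
  then have Sb: "submatrix A I J \<in> carrier_mat (card I) (card I)" by blast
  then have "det (transpose_mat (submatrix A I J)) = 0" using det0 det_transpose[OF Sb] by simp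
  then obtain x where x: "x \<in> carrier_vec (card I)" "x \<noteq> 0\<^sub>v (card I)"
    and x0: "transpose_mat (submatrix A I J) *\<^sub>v x = 0\<^sub>v (card I)"
    using det_0_iff_vec_prod_zero_field[of "transpose_mat (submatrix A I J)"] Sb by auto
  define c where "c = embed_vec k I x"
  have c: "c \<in> carrier_vec k" unfolding c_def embed_vec_def by simp
  (* c vanishes on the k - t identity columns outside I and, via x, on the t columns J of A. *)
  define Z where "Z = ({..<k} - I) \<union> (+) k ` J"
  have "card Z = card ({..<k} - I) + card ((+) k ` J)"
    unfolding Z_def using finJ by (intro card_Un_disjoint) auto
  also have "card ({..<k} - I) = k - card I" using I' finI by (simp add: card_Diff_subset)
  also have "card ((+) k ` J) = card I" using IJ by (simp add: card_image)
  also have "card I \<le> k" using card_mono[of "{..<k}" I] I' by simp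
  then have "k - card I + card I = k" by simp
  finally have "k \<le> card Z" by simp
  moreover have "Z \<subseteq> {..<k + s}" unfolding Z_def using J' by auto
  moreover have "(transpose_mat (four_block_mat (1\<^sub>m k) A (0\<^sub>m 0 k) (0\<^sub>m 0 s)) *\<^sub>v c) $ j = 0"
    if j: "j \<in> Z" for j
  proof (cases "j < k")
    case True
    then have "j \<notin> I" using j unfolding Z_def by auto
    then have "c $ j = 0" using True unfolding c_def embed_vec_def by simp
    then show ?thesis using transpose_systematic_mult_vec[OF A c, of j] True by simp
  next
    case False
    then obtain b where b: "b \<in> J" "j = k + b" using j unfolding Z_def by auto
    define b' where "b' = card {y\<in>J. y < b}"
    have "{y\<in>J. y < b} \<subset> J" using b(1) by auto
    then have b': "b' < card J" "pick J b' = b"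
      unfolding b'_def using psubset_card_mono[OF finJ] pick_card_in_set[OF b(1)] by auto
    have "(transpose_mat A *\<^sub>v c) $ b = (transpose_mat (submatrix A I J) *\<^sub>v x) $ b'"
      using transpose_mult_embed_vec[OF A I' J' IJ x(1) b'(1)] b'(2) unfolding c_def by simp
    also have "\<dots> = 0" using x0 b'(1) IJ by simp
    finally show ?thesis
      using transpose_systematic_mult_vec[OF A c, of j] b J' False by auto
  qed
  ultimately have "c = 0\<^sub>v k" using indep[OF c] by blast
  then show False using embed_vec_eq_0_imp[OF I' x(1)] x(2) unfolding c_def by simp
qed

locale pmds_puncturing =
  fixes C :: "'a::field vec set" and n k l m :: nat and r :: "nat \<Rightarrow> nat"
  assumes l_pos: "l > 0"
    and length_eq: "n = block_off l r m"
    and dim_less: "k < m * l"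
    and code_carrier: "C \<subseteq> carrier_vec n"
    and MDS_puncture: "\<And>E. E \<subseteq> {0..<n} \<Longrightarrow> \<forall>i<m. card (E \<inter> block_cols l r i) = r i \<Longrightarrow>
      is_MDS (m * l) k (puncture ({0..<n} - E) ` C)"
begin

lemma is_MDS_puncture_unerased:
  assumes "unerased_set l m r S"
  shows "is_MDS (m * l) k (puncture S ` C)"
proof -
  have "{0..<n} - ({0..<n} - S) = S" using assms length_eq unfolding unerased_set_def by auto
  moreover have "\<forall>i<m. card (({0..<n} - S) \<inter> block_cols l r i) = r i"
    using card_erasures_in_block[OF assms] length_eq by simp
  ultimately show ?thesis using MDS_puncture[of "{0..<n} - S"] by auto
qed

lemma card_nonzero_on_unerased_set_ge:
  assumes S: "unerased_set l m r S" and v: "v \<in> C" and p: "p \<in> S" "v $ p \<noteq> 0"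
  shows "m * l - k + 1 \<le> card {q\<in>S. v $ q \<noteq> 0}"
proof -
  have "dim_vec v = n" using v code_carrier by auto
  then have S': "S \<subseteq> {0..<dim_vec v}" "finite S"
    using S length_eq unfolding unerased_set_def by (auto intro: finite_subset)
  then have w: "weight (puncture S v) = card {q\<in>S. v $ q \<noteq> 0}"
    using weight_puncture by blast
  have "card {q\<in>S. v $ q \<noteq> 0} \<noteq> 0" using p S'(2) by auto
  then have "puncture S v \<noteq> 0\<^sub>v (m * l)" using w by auto
  moreover have "puncture S v \<in> puncture S ` C" using v by blast
  ultimately have "m * l - k + 1 \<le> weight (puncture S v)"
    using is_MDS_weight_ge[OF is_MDS_puncture_unerased[OF S]] by blast
  then show ?thesis using w by simp
qed

lemma codeword_eq_0_if_vanishes: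
  assumes S: "unerased_set l m r S" and v: "v \<in> C"
    and Y: "Y \<subseteq> S" "k \<le> card Y" and vanish: "\<forall>p\<in>Y. v $ p = 0"
  shows "v = 0\<^sub>v n"
proof (rule ccontr)
  assume "v \<noteq> 0\<^sub>v n"
  then obtain p where p: "p < n" "v $ p \<noteq> 0" using v code_carrier by (auto simp: vec_eq_iff)
  have finS: "finite S" and cardS: "card S = m * l"
    using S card_unerased_set unfolding unerased_set_def by (auto intro: finite_subset)
  show False
  proof (cases "\<exists>q\<in>S. v $ q \<noteq> 0")
    case True
    then obtain q where "q \<in> S" "v $ q \<noteq> 0" by blast
    then have "m * l - k + 1 \<le> card {q\<in>S. v $ q \<noteq> 0}"
      by (rule card_nonzero_on_unerased_set_ge[OF S v])
    also have "\<dots> \<le> card (S - Y)" using finS vanish by (intro card_mono) auto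
    also have "\<dots> = m * l - card Y" using Y finS cardS by (simp add: card_Diff_subset finite_subset)
    finally show False using Y(2) dim_less by linarith
  next
    case False
    then have "p \<notin> S" using p by blast
    have "p \<in> {0..<block_off l r m}" using p(1) length_eq by simp
    then have "p \<in> (\<Union>i<m. block_cols l r i)" by (simp only: block_cols_cover)
    then obtain i where i: "i < m" "p \<in> block_cols l r i" by blast
    have "S \<inter> block_cols l r i \<noteq> {}"
      using S i l_pos unfolding unerased_set_def by (metis card.empty less_not_refl)
    then obtain q where q: "q \<in> S \<inter> block_cols l r i" by blast
    let ?S' = "insert p (S - {q})"
    have "m * l - k + 1 \<le> card {x\<in>?S'. v $ x \<noteq> 0}"
      using unerased_set_swap[OF S i(1) q] i \<open>p \<notin> S\<close> p
      by (intro card_nonzero_on_unerased_set_ge[OF _ v, of _ p]) auto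
    also have "\<dots> \<le> card {p}" using False by (intro card_mono) auto
    finally show False using dim_less by simp
  qed
qed

lemma generator_columns_independent:
  assumes gen: "is_generator_matrix k n G C" and S: "unerased_set l m r S"
    and Y: "Y \<subseteq> S" "k \<le> card Y" and c: "c \<in> carrier_vec k"
    and vanish: "\<forall>p\<in>Y. (transpose_mat G *\<^sub>v c) $ p = 0"
  shows "c = 0\<^sub>v k"
proof -
  have "transpose_mat G *\<^sub>v c \<in> C"
    using gen c unfolding is_generator_matrix_def row_space_def by auto
  then have "transpose_mat G *\<^sub>v c = 0\<^sub>v n" by (rule codeword_eq_0_if_vanishes[OF S _ Y vanish])
  then show ?thesis using gen c unfolding is_generator_matrix_def by blast
qed

lemma GC_columns_independent:
  assumes gen: "is_generator_matrix k n G C" and c: "c \<in> carrier_vec k"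
    and Z: "Z \<subseteq> {..<m * l}" "k \<le> card Z"
    and vanish: "\<forall>j\<in>Z. (transpose_mat (GC_mat l m r G) *\<^sub>v c) $ j = 0"
  shows "c = 0\<^sub>v k"
proof (rule generator_columns_independent[OF gen unerased_set_gc_cols[OF l_pos] _ _ c])
  have G: "G \<in> carrier_mat k n" using gen unfolding is_generator_matrix_def by simp
  show "gc_col l r ` Z \<subseteq> gc_col l r ` {..<m * l}" using Z(1) by blast
  show "k \<le> card (gc_col l r ` Z)"
    using Z(2) card_image[OF inj_on_subset[OF inj_gc_col[OF l_pos, of r] subset_UNIV]] by simp
  have off: "block_off l r m \<le> n" using length_eq by simp
  show "\<forall>p\<in>gc_col l r ` Z. (transpose_mat G *\<^sub>v c) $ p = 0"
  proof
    fix p assume "p \<in> gc_col l r ` Z"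
    then obtain j where j: "j \<in> Z" "p = gc_col l r j" by blast
    then have "j < m * l" using Z(1) by blast
    then show "(transpose_mat G *\<^sub>v c) $ p = 0"
      using transpose_GC_mat_mult_vec[OF G off l_pos c \<open>j < m * l\<close>, symmetric] vanish j
      by simp
  qed
qed

end

theorem theorem15:
  fixes C :: "'a::{finite,field} vec set"
    and m s l k n :: nat and r :: "nat \<Rightarrow> nat"
  assumes "m \<ge> 2" and "s \<ge> 1" and "l \<ge> 1" and "\<forall>i<m. r i \<ge> 1"
    and "n = (\<Sum>i<m. l + r i)"
    and "int k = int (m * l) - int s"
    and "is_PMDS n k l m r C"
  shows "\<exists>G A. is_generator_matrix k n G C \<and> A \<in> carrier_mat k s \<and> superregular A \<and>
           GC_mat l m r G = four_block_mat (1\<^sub>m k) A (0\<^sub>m 0 k) (0\<^sub>m 0 s)"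
proof -
  obtain G0 where gen0: "is_generator_matrix k n G0 C"
    and MDS: "\<forall>E. E \<subseteq> {0..<n} \<longrightarrow> (\<forall>i<m. card (E \<inter> block_cols l r i) = r i) \<longrightarrow>
      is_MDS (m * l) k (puncture ({0..<n} - E) ` C)"
    using assms(7) unfolding is_PMDS_def by blast
  have G0: "G0 \<in> carrier_mat k n" using gen0 unfolding is_generator_matrix_def by blast
  have k: "k + s = m * l" using assms(6) by linarith
  interpret pmds_puncturing C n k l m r
    using assms(2,3,5) k MDS gen0
    by unfold_locales (auto simp: block_off_def add.commute is_generator_matrix_def row_space_def)
  have GC0: "GC_mat l m r G0 \<in> carrier_mat k (m * l)"
    using GC_mat_carrier[of l m r G0] G0 by simp
  have "c = 0\<^sub>v k"
    if "c \<in> carrier_vec k" "\<forall>j<k. (transpose_mat (GC_mat l m r G0) *\<^sub>v c) $ j = 0" for c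
    using GC_columns_independent[OF gen0 that(1), of "{..<k}"] that(2) k by auto
  moreover have "k \<le> m * l" and s: "m * l - k = s" using k by auto
  ultimately obtain B A where B: "B \<in> carrier_mat k k" "det B \<noteq> 0" and A: "A \<in> carrier_mat k s"
    and BGC: "B * GC_mat l m r G0 = four_block_mat (1\<^sub>m k) A (0\<^sub>m 0 k) (0\<^sub>m 0 s)"
    using systematic_form[OF GC0] unfolding s by metis
  have gen: "is_generator_matrix k n (B * G0) C" by (rule is_generator_matrix_mult[OF gen0 B])
  have GC: "GC_mat l m r (B * G0) = four_block_mat (1\<^sub>m k) A (0\<^sub>m 0 k) (0\<^sub>m 0 s)"
    using GC_mat_mult[OF B(1) G0] BGC length_eq l_pos by simp
  have "superregular A"
    using superregular_if_systematic_columns_independent[OF A] GC_columns_independent[OF gen] GC k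
    by simp
  then show ?thesis using gen A GC by blast
qed

end
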